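(* Let $K$ be a number field, let $\mathcal{P}$ be the set of nonzero prime ideals of $K$, and let $\mathrm{N}=\mathrm{N}_{K/\mathbb{Q}}$ denote the absolute norm. Let $\mathcal{A}\subseteq\mathcal{P}$ be a subset such that there exist constants $\delta\geq 0$ and $C\in\mathbb{R}$ (depending at most on $\mathcal{A}$) with \[ \sum_{\substack{\mathfrak{p}\in\mathcal{A}\\ \mathrm{N}\mathfrak{p}\leq x}}\frac{1}{\mathrm{N}\mathfrak{p}}=\delta\log\log x+C+o\Big(\frac{1}{\log x}\Big)\qquad (x\to\infty). \] Let $b\geq 2$ be an integer, let $m\geq 1$, and let $S$ be a string of $m$ base-$b$ digits $a_1a_2\cdots a_m$ with $a_1\neq 0$; we also write $S$ for the positive integer $\sum_{i=1}^m a_i b^{m-i}$ whose base-$b$ expansion is this string. Let $\mathcal{A}_{b,S}$ be the set of $\mathfrak{p}\in\mathcal{A}$ such that the base-$b$ expansion of $\mathrm{N}\mathfrak{p}$ begins with the string $S$. Then the logarithmic density of $\mathcal{A}_{b,S}$ exists and \[ d(\mathcal{A}_{b,S})=\delta\log_b\big(1+S^{-1}\big). \]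
   Context: For a set $\mathcal{B}$ of prime ideals of $K$, define \[ \overline{d(\mathcal{B})}=\limsup_{x\to\infty}\frac{1}{\log\log x}\sum_{\substack{\mathfrak{p}\in\mathcal{B}\\ \mathrm{N}\mathfrak{p}\leq x}}\frac{1}{\mathrm{N}\mathfrak{p}},\qquad \underline{d(\mathcal{B})}=\liminf_{x\to\infty}\frac{1}{\log\log x}\sum_{\substack{\mathfrak{p}\in\mathcal{B}\\ \mathrm{N}\mathfrak{p}\leq x}}\frac{1}{\mathrm{N}\mathfrak{p}}. \] If these are equal, their common value is the logarithmic density $d(\mathcal{B})$ of $\mathcal{B}$. *)

theory Defs
  imports "HOL-Analysis.Analysis" "HOL-Computational_Algebra.Polynomial"
          "HOL-Library.Landau_Symbols" "HOL-Library.Sublist"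
begin

definition number_field :: "complex set \<Rightarrow> bool" where
  "number_field K \<longleftrightarrow>
     0 \<in> K \<and> 1 \<in> K \<and>
     (\<forall>x\<in>K. \<forall>y\<in>K. x + y \<in> K \<and> x - y \<in> K \<and> x * y \<in> K) \<and>
     (\<forall>x\<in>K. x \<noteq> 0 \<longrightarrow> inverse x \<in> K) \<and>
     (\<exists>B. finite B \<and> B \<subseteq> K \<and>
          (\<forall>x\<in>K. \<exists>c :: complex \<Rightarrow> rat. x = (\<Sum>b\<in>B. of_rat (c b) * b)))"

definition ring_of_integers :: "complex set \<Rightarrow> complex set" where
  "ring_of_integers K = {x \<in> K. algebraic_int x}"

definition is_ideal :: "complex set \<Rightarrow> complex set \<Rightarrow> bool" where
  "is_ideal K I \<longleftrightarrow> I \<subseteq> ring_of_integers K \<and> 0 \<in> I \<and>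
     (\<forall>x\<in>I. \<forall>y\<in>I. x + y \<in> I \<and> x - y \<in> I) \<and>
     (\<forall>r\<in>ring_of_integers K. \<forall>x\<in>I. r * x \<in> I)"

definition nonzero_primes :: "complex set \<Rightarrow> complex set set" where
  "nonzero_primes K = {P. is_ideal K P \<and> P \<noteq> {0} \<and> P \<noteq> ring_of_integers K \<and>
     (\<forall>x\<in>ring_of_integers K. \<forall>y\<in>ring_of_integers K. x * y \<in> P \<longrightarrow> x \<in> P \<or> y \<in> P)}"

(* absolute norm of an ideal: the index [O_K : I], i.e. the number of cosets x + I *)
definition abs_norm :: "complex set \<Rightarrow> complex set \<Rightarrow> nat" where
  "abs_norm K I = card ((\<lambda>x. (\<lambda>y. x + y) ` I) ` ring_of_integers K)"

definition recip_norm_sum :: "complex set \<Rightarrow> complex set set \<Rightarrow> real \<Rightarrow> real" where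
  "recip_norm_sum K B x = (\<Sum>P\<in>{P\<in>B. real (abs_norm K P) \<le> x}. 1 / real (abs_norm K P))"

definition upper_log_density :: "complex set \<Rightarrow> complex set set \<Rightarrow> ereal" where
  "upper_log_density K B =
     Limsup at_top (\<lambda>x::real. ereal (recip_norm_sum K B x / ln (ln x)))"

definition lower_log_density :: "complex set \<Rightarrow> complex set set \<Rightarrow> ereal" where
  "lower_log_density K B =
     Liminf at_top (\<lambda>x::real. ereal (recip_norm_sum K B x / ln (ln x)))"

(* base-b digit string of n (most significant digit first); for n \<ge> 1, b \<ge> 2
   this has no leading zero *)
fun base_digits :: "nat \<Rightarrow> nat \<Rightarrow> nat list" where
  "base_digits b n = (if b < 2 \<or> n < b then [n] else base_digits b (n div b) @ [n mod b])"

definition digit_value :: "nat \<Rightarrow> nat list \<Rightarrow> nat" where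
  "digit_value b S = (\<Sum>i<length S. S ! i * b ^ (length S - 1 - i))"

definition leading_digit_subset :: "complex set \<Rightarrow> complex set set \<Rightarrow> nat \<Rightarrow> nat list \<Rightarrow> complex set set" where
  "leading_digit_subset K A b S = {P\<in>A. prefix S (base_digits b (abs_norm K P))}"

end

theory Submission
  imports Defs "HOL-Real_Asymp.Real_Asymp"
begin

(* Grouping the primes of A by their norm turns the statement into one about a nonnegative weight g
   on the positive integers whose partial sums satisfy sum_{n <= x} g n = delta log log x + C
   + o(1 / log x). The integers whose base-b expansion begins with S are those in the blocks
   [S b^k, (S + 1) b^k). By the hypothesis, the k-th block has weight
   delta (log log ((S + 1) b^k) - log log (S b^k)) + o(1 / k) = delta log_b (1 + 1 / S) / k + o(1 / k),
   so the blocks up to height K carry weight delta log_b (1 + 1 / S) log K + o(log K), and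
   log K ~ log log x for b^K <= x < b^(K + 1).
   The algebraic input is that a nonzero prime ideal has norm at least 2 and that only finitely many
   have bounded norm: each contains a rational prime p, and O_K / p O_K is finite because elements
   of O_K that are linearly independent modulo p are linearly independent over Q. *)

section \<open>Prime ideals of bounded norm\<close>

lemma of_int_in_number_field:
  assumes "number_field K"
  shows "of_int n \<in> K"
proof -
  have "of_nat m \<in> K" for m
    by (induction m) (use assms in \<open>auto simp: number_field_def\<close>)
  moreover have "0 - of_nat m \<in> K" for m
    using calculation assms unfolding number_field_def by blast
  ultimately show ?thesis
    by (cases n rule: int_cases) (metis diff_0 of_int_of_nat_eq of_int_minus)+
qed

lemma of_int_in_ring_of_integers:
  "number_field K \<Longrightarrow> of_int n \<in> ring_of_integers K"
  by (simp add: ring_of_integers_def of_int_in_number_field)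

lemma ideal_closed:
  assumes "is_ideal K P"
  shows ideal_subset: "P \<subseteq> ring_of_integers K"
    and ideal_zero: "0 \<in> P"
    and ideal_add: "x \<in> P \<Longrightarrow> y \<in> P \<Longrightarrow> x + y \<in> P"
    and ideal_diff: "x \<in> P \<Longrightarrow> y \<in> P \<Longrightarrow> x - y \<in> P"
    and ideal_mult: "r \<in> ring_of_integers K \<Longrightarrow> x \<in> P \<Longrightarrow> r * x \<in> P"
  using assms by (auto simp: is_ideal_def)

lemma ideal_uminus: "is_ideal K P \<Longrightarrow> x \<in> P \<Longrightarrow> - x \<in> P"
  using ideal_diff[OF _ ideal_zero] by fastforce

lemma ideal_int_mult:
  "number_field K \<Longrightarrow> is_ideal K P \<Longrightarrow> x \<in> P \<Longrightarrow> of_int n * x \<in> P"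
  using ideal_mult of_int_in_ring_of_integers by blast

lemma ideal_sum:
  assumes "is_ideal K P" "finite A" "\<And>i. i \<in> A \<Longrightarrow> f i \<in> P"
  shows "(\<Sum>i\<in>A. f i) \<in> P"
  using assms(2,3) by (induction A rule: finite_induct) (auto intro: ideal_zero ideal_add assms(1))

lemma ideal_power:
  assumes "is_ideal K P" "a \<in> P"
  shows "a ^ Suc n \<in> P"
proof (induction n)
  case (Suc n)
  have "a * a ^ Suc n \<in> P"
    using ideal_mult[OF assms(1) _ Suc] assms ideal_subset by blast
  then show ?case
    by simp
qed (use assms in simp)

lemma ideal_eq_ring_of_integers_if_one: "is_ideal K P \<Longrightarrow> 1 \<in> P \<Longrightarrow> P = ring_of_integers K"
  using ideal_mult[of K P _ 1] ideal_subset by force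

lemma ideal_contains_nonzero_int:
  assumes nf: "number_field K" and P: "is_ideal K P" and a: "a \<in> P" "a \<noteq> 0"
  obtains c :: int where "c \<noteq> 0" "of_int c \<in> P"
proof -
  have a_times_poly: "a * poly (map_poly of_int q) a \<in> P" for q
  proof -
    have "a * poly (map_poly of_int q) a
        = (\<Sum>i\<le>degree (map_poly (of_int :: int \<Rightarrow> complex) q). of_int (coeff q i) * a ^ Suc i)"
      by (simp add: poly_altdef sum_distrib_left coeff_map_poly algebra_simps)
    also have "\<dots> \<in> P"
      by (intro ideal_sum[OF P] ideal_int_mult[OF nf P] ideal_power[OF P a(1)]) auto
    finally show ?thesis .
  qed
  \<comment> \<open>After dividing \<open>q\<close> by a power of \<open>X\<close>, its constant term is \<open>c = - a * q'(a) \<noteq> 0\<close>.\<close>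
  have "\<exists>c::int. c \<noteq> 0 \<and> of_int c \<in> P"
    if "q \<noteq> 0" "poly (map_poly of_int q) a = 0" for q
    using that
  proof (induction q rule: pCons_induct)
    case (pCons c q)
    have eq: "of_int c + a * poly (map_poly of_int q) a = 0"
      using pCons.prems(2) by (simp add: map_poly_pCons)
    show ?case
    proof (cases "c = 0")
      case False
      then have "of_int c = - (a * poly (map_poly of_int q) a)"
        using eq by (simp add: eq_neg_iff_add_eq_0)
      then show ?thesis
        using False ideal_uminus[OF P a_times_poly] by metis
    next
      case True
      then show ?thesis
        using pCons.hyps pCons.IH eq a(2) by simp
    qed
  qed simp
  moreover have "algebraic_int a"
    using a(1) ideal_subset[OF P] by (auto simp: ring_of_integers_def)
  then obtain q where "poly (map_poly of_int q) a = 0" "lead_coeff q = 1"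
    by (auto simp: algebraic_int_altdef_ipoly)
  moreover from this have "q \<noteq> 0"
    by auto
  ultimately show ?thesis
    using that by blast
qed

lemma nonzero_prime_contains_prime_factor:
  assumes nf: "number_field K" and P: "P \<in> nonzero_primes K"
  shows "n > 0 \<Longrightarrow> of_nat n \<in> P \<Longrightarrow> \<exists>p::nat. prime p \<and> of_nat p \<in> P"
proof (induction n rule: less_induct)
  case (less n)
  have "1 \<notin> P"
    using P ideal_eq_ring_of_integers_if_one[of K P] by (auto simp: nonzero_primes_def)
  then have "n \<noteq> 1"
    using less.prems by auto
  then obtain p m where p: "prime p" "n = p * m"
    using prime_factor_nat by (metis dvd_def)
  have "of_nat p \<in> P \<or> of_nat m \<in> P"
    using P less.prems(2) p(2)
      of_int_in_ring_of_integers[OF nf, of "int p"] of_int_in_ring_of_integers[OF nf, of "int m"]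
    unfolding nonzero_primes_def by simp
  moreover have "m < n" "m > 0"
    using p less.prems(1) prime_gt_1_nat[OF p(1)] by simp_all
  ultimately show ?case
    using less.IH p(1) by blast
qed

lemma nonzero_prime_contains_prime:
  assumes nf: "number_field K" and P: "P \<in> nonzero_primes K"
  obtains p :: int where "prime p" "of_int p \<in> P"
proof -
  have ideal: "is_ideal K P"
    using P by (simp add: nonzero_primes_def)
  obtain a where "a \<in> P" "a \<noteq> 0"
    using P ideal_zero[OF ideal] by (auto simp: nonzero_primes_def)
  then obtain c :: int where c: "c \<noteq> 0" "of_int c \<in> P"
    using ideal_contains_nonzero_int[OF nf ideal] by blast
  have "nat \<bar>c\<bar> > 0"
    using c(1) by simp
  moreover have "of_nat (nat \<bar>c\<bar>) \<in> P"
  proof (cases "c \<ge> 0")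
    case False
    then show ?thesis
      using ideal_uminus[OF ideal c(2)] by simp
  qed (use c in simp)
  ultimately obtain p :: nat where "prime p" "of_nat p \<in> P"
    using nonzero_prime_contains_prime_factor[OF nf P] by blast
  then show ?thesis
    using that[of "int p"] by simp
qed

(* The ideal p O_K, written as the intersection of all ideals containing p: this avoids having
   to show that the products p y with y in O_K are closed under addition. *)
definition int_ideal :: "complex set \<Rightarrow> int \<Rightarrow> complex set" where
  "int_ideal K p = \<Inter>{I. is_ideal K I \<and> of_int p \<in> I}"

lemma int_ideal_subset: "is_ideal K I \<Longrightarrow> of_int p \<in> I \<Longrightarrow> int_ideal K p \<subseteq> I"
  by (auto simp: int_ideal_def)

lemma int_ideal_zero: "0 \<in> int_ideal K p"
  by (auto simp: int_ideal_def intro: ideal_zero)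

lemma int_ideal_multiple:
  "y \<in> ring_of_integers K \<Longrightarrow> of_int p * y \<in> int_ideal K p"
  using ideal_mult by (fastforce simp: int_ideal_def mult.commute[of "of_int p"])

lemma int_ideal_add:
  "x \<in> int_ideal K p \<Longrightarrow> y \<in> int_ideal K p \<Longrightarrow> x + y \<in> int_ideal K p"
  by (auto simp: int_ideal_def intro: ideal_add)

lemma int_ideal_diff:
  "x \<in> int_ideal K p \<Longrightarrow> y \<in> int_ideal K p \<Longrightarrow> x - y \<in> int_ideal K p"
  by (auto simp: int_ideal_def intro: ideal_diff)

lemma int_ideal_int_mult:
  "number_field K \<Longrightarrow> x \<in> int_ideal K p \<Longrightarrow> of_int n * x \<in> int_ideal K p"
  by (auto simp: int_ideal_def intro: ideal_int_mult)

lemma int_ideal_sum: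
  "finite A \<Longrightarrow> (\<And>i. i \<in> A \<Longrightarrow> f i \<in> int_ideal K p) \<Longrightarrow> (\<Sum>i\<in>A. f i) \<in> int_ideal K p"
  by (induction A rule: finite_induct) (auto intro: int_ideal_zero int_ideal_add)

lemma int_ideal_reduce_coeffs:
  assumes "number_field K" "finite Y" "Y \<subseteq> ring_of_integers K"
  shows "(\<Sum>y\<in>Y. of_int (c y) * y) - (\<Sum>y\<in>Y. of_int (c y mod p) * y) \<in> int_ideal K p"
proof -
  have "(\<Sum>y\<in>Y. of_int (c y) * y) - (\<Sum>y\<in>Y. of_int (c y mod p) * y)
      = (\<Sum>y\<in>Y. of_int (c y div p) * (of_int p * y))"
  proof (subst sum_subtractf[symmetric], rule sum.cong)
    fix y
    have "(of_int (c y) :: complex) = of_int (c y div p) * of_int p + of_int (c y mod p)"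
      by (metis div_mult_mod_eq of_int_add of_int_mult)
    then show "of_int (c y) * y - of_int (c y mod p) * y = of_int (c y div p) * (of_int p * y)"
      by (simp add: algebra_simps)
  qed simp
  also have "\<dots> \<in> int_ideal K p"
    using assms by (intro int_ideal_sum int_ideal_int_mult int_ideal_multiple) auto
  finally show ?thesis .
qed

definition independent_mod :: "complex set \<Rightarrow> int \<Rightarrow> complex set \<Rightarrow> bool" where
  "independent_mod K p Y \<longleftrightarrow> finite Y \<and> Y \<subseteq> ring_of_integers K \<and>
     (\<forall>a. (\<Sum>y\<in>Y. of_int (a y) * y) \<in> int_ideal K p \<longrightarrow> (\<forall>y\<in>Y. p dvd a y))"

lemma independent_mod_int_relation:
  assumes p: "prime p" and Y: "independent_mod K p Y" and v: "v \<in> Y"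
  shows "(\<Sum>y\<in>Y. of_int (d y) * y) = 0 \<Longrightarrow> d v = 0"
proof (induction "nat \<bar>d v\<bar>" arbitrary: d rule: less_induct)
  case less
  have "\<forall>y\<in>Y. p dvd d y"
    using Y less.prems int_ideal_zero by (auto simp: independent_mod_def)
  then have d: "d y = p * (d y div p)" if "y \<in> Y" for y
    using that by simp
  have "of_int p * (\<Sum>y\<in>Y. of_int (d y div p) * y) = (\<Sum>y\<in>Y. of_int (d y) * (y :: complex))"
    unfolding sum_distrib_left
    by (rule sum.cong) (simp_all add: d[symmetric] mult.assoc[symmetric] flip: of_int_mult)
  then have rel: "(\<Sum>y\<in>Y. of_int (d y div p) * y) = (0 :: complex)"
    using less.prems p by (simp add: prime_gt_0_int[THEN less_imp_neq, symmetric])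
  show "d v = 0"
  proof (rule ccontr)
    assume "d v \<noteq> 0"
    moreover have "\<bar>d v\<bar> = p * \<bar>d v div p\<bar>"
      using d[OF v] prime_ge_2_int[OF p] by (metis abs_mult abs_of_nonneg order.trans zero_le_numeral)
    ultimately have "\<bar>d v div p\<bar> < \<bar>d v\<bar>"
      using prime_ge_2_int[OF p] mult_right_mono[of 2 p "\<bar>d v div p\<bar>"] by auto
    then have "nat \<bar>d v div p\<bar> < nat \<bar>d v\<bar>"
      by simp
    then have "d v div p = 0"
      using less.hyps[of "\<lambda>y. d y div p"] rel by simp
    then show False
      using d[OF v] \<open>d v \<noteq> 0\<close> by simp
  qed
qed

lemma int_relation_from_rat_relation:
  assumes Y: "finite Y" and rel: "(\<Sum>y\<in>Y. of_rat (c y) * y) = (0 :: complex)"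
    and v: "v \<in> Y" "c v \<noteq> 0"
  obtains d where "(\<Sum>y\<in>Y. of_int (d y) * y) = (0 :: complex)" "d v \<noteq> 0"
proof -
  define D where "D = (\<Prod>y\<in>Y. snd (quotient_of (c y)))"
  define d where "d = (\<lambda>y. fst (quotient_of (c y)) * (D div snd (quotient_of (c y))))"
  have "D > 0"
    unfolding D_def by (rule prod_pos) (metis quotient_of_denom_pos prod.collapse)
  have clear: "of_int D * of_rat (c y) = (of_int (d y) :: complex)" if "y \<in> Y" for y
  proof -
    obtain n m where nm: "quotient_of (c y) = (n, m)"
      by fastforce
    have "m dvd D"
      unfolding D_def using dvd_prodI[OF Y that, of "\<lambda>y. snd (quotient_of (c y))"] nm by simp
    then obtain k where k: "D = m * k"
      by blast
    have "of_int D * c y = of_int (n * k)"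
      using quotient_of_div[OF nm] k quotient_of_denom_pos[OF nm] by simp
    moreover have "d y = n * k"
      using nm k quotient_of_denom_pos[OF nm] by (simp add: d_def)
    ultimately show ?thesis
      by (metis of_rat_mult of_rat_of_int_eq)
  qed
  have "(\<Sum>y\<in>Y. of_int (d y) * y) = of_int D * (\<Sum>y\<in>Y. of_rat (c y) * (y :: complex))"
    by (simp add: sum_distrib_left clear[symmetric] mult.assoc)
  with rel have "(\<Sum>y\<in>Y. of_int (d y) * y) = (0 :: complex)"
    by simp
  moreover have "d v \<noteq> 0"
    using clear[OF v(1)] v(2) \<open>D > 0\<close> by (metis mult_eq_0_iff of_int_eq_0_iff of_rat_eq_0_iff less_irrefl)
  ultimately show ?thesis
    using that by blast
qed

lemma vector_space_rat_complex: "vector_space (\<lambda>(q :: rat) (z :: complex). of_rat q * z)"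
  by unfold_locales (auto simp: algebra_simps of_rat_add of_rat_mult)

lemma independent_mod_card_bounded:
  assumes nf: "number_field K" and p: "prime p"
  obtains N where "\<And>Y. independent_mod K p Y \<Longrightarrow> card Y \<le> N"
proof -
  let ?scale = "\<lambda>(q :: rat) (z :: complex). of_rat q * z"
  interpret Q: vector_space ?scale
    by (rule vector_space_rat_complex)
  obtain B where B: "finite B" "\<forall>x\<in>K. \<exists>c :: complex \<Rightarrow> rat. x = (\<Sum>b\<in>B. of_rat (c b) * b)"
    using nf unfolding number_field_def by blast
  have "card Y \<le> card B" if Y: "independent_mod K p Y" for Y
  proof (rule conjunct2[OF Q.independent_span_bound[OF B(1)]])
    have finY: "finite Y" and YK: "Y \<subseteq> K"
      using Y by (auto simp: independent_mod_def ring_of_integers_def)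
    show "\<not> Q.dependent Y"
    proof
      assume "Q.dependent Y"
      then obtain c v where "(\<Sum>y\<in>Y. of_rat (c y) * y) = 0" "v \<in> Y" "c v \<noteq> 0"
        unfolding Q.dependent_finite[OF finY] by auto
      then obtain d where "(\<Sum>y\<in>Y. of_int (d y) * y) = (0 :: complex)" "d v \<noteq> 0" "v \<in> Y"
        using int_relation_from_rat_relation finY by metis
      then show False
        using independent_mod_int_relation[OF p Y] by blast
    qed
    show "Y \<subseteq> Q.span B"
    proof
      fix x assume "x \<in> Y"
      then obtain c where c: "x = (\<Sum>b\<in>B. of_rat (c b) * b)"
        using B(2) YK by blast
      show "x \<in> Q.span B"
        unfolding c by (intro Q.span_sum Q.span_scale[of _ _ "c _", simplified] Q.span_base)
    qed
  qed
  then show ?thesis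
    using that by blast
qed

lemma not_independent_mod_insert:
  assumes nf: "number_field K" and Y: "independent_mod K p Y"
    and x: "x \<in> ring_of_integers K" "x \<notin> Y" and dep: "\<not> independent_mod K p (insert x Y)"
  obtains a where "(\<Sum>y\<in>insert x Y. of_int (a y) * y) \<in> int_ideal K p" "\<not> p dvd a x"
proof -
  have finY: "finite Y" and YO: "Y \<subseteq> ring_of_integers K"
    using Y by (auto simp: independent_mod_def)
  obtain a where a: "(\<Sum>y\<in>insert x Y. of_int (a y) * y) \<in> int_ideal K p"
    and not_dvd: "\<exists>y\<in>insert x Y. \<not> p dvd a y"
    using dep finY YO x by (auto simp: independent_mod_def)
  have "\<not> p dvd a x"
  proof
    assume "p dvd a x"
    then obtain k where "a x = p * k"
      by blast
    then have "of_int (a x) * x = of_int k * (of_int p * x)"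
      by (simp add: algebra_simps)
    also have "\<dots> \<in> int_ideal K p"
      by (rule int_ideal_int_mult[OF nf int_ideal_multiple[OF x(1)]])
    finally have "of_int (a x) * x \<in> int_ideal K p" .
    moreover have "(\<Sum>y\<in>insert x Y. of_int (a y) * y) = of_int (a x) * x + (\<Sum>y\<in>Y. of_int (a y) * y)"
      using x(2) finY by simp
    ultimately have "(\<Sum>y\<in>Y. of_int (a y) * y) \<in> int_ideal K p"
      using int_ideal_diff[OF a] by (metis add_diff_cancel_left')
    then have "\<forall>y\<in>Y. p dvd a y"
      using Y by (simp add: independent_mod_def)
    then show False
      using not_dvd \<open>p dvd a x\<close> by auto
  qed
  with a show ?thesis
    using that by blast
qed

lemma maximal_independent_mod_spans:
  assumes nf: "number_field K" and p: "prime p" and Y: "independent_mod K p Y"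
    and maximal: "\<And>Z. independent_mod K p Z \<Longrightarrow> card Z \<le> card Y"
    and x: "x \<in> ring_of_integers K"
  obtains c where "x - (\<Sum>y\<in>Y. of_int (c y) * y) \<in> int_ideal K p"
proof (cases "x \<in> Y")
  case True
  have "(\<Sum>y\<in>Y. of_int (of_bool (y = x)) * y) = x"
    using True Y by (simp add: independent_mod_def)
  then show ?thesis
    using that[of "\<lambda>y. of_bool (y = x)"] int_ideal_zero by simp
next
  case False
  have finY: "finite Y"
    using Y by (simp add: independent_mod_def)
  have "\<not> independent_mod K p (insert x Y)"
    using maximal[of "insert x Y"] False finY by auto
  then obtain a where a: "(\<Sum>y\<in>insert x Y. of_int (a y) * y) \<in> int_ideal K p" and "\<not> p dvd a x"
    using not_independent_mod_insert[OF nf Y x False] by blast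
  then have "coprime (a x) p"
    using p by (simp add: prime_imp_coprime coprime_commute)
  then obtain t r where "t * a x + r * p = 1"
    using bezout_int[of "a x" p] by (auto simp: coprime_iff_gcd_eq_1)
  then have bezout: "of_int t * of_int (a x) + of_int r * of_int p = (1 :: complex)"
    by (metis of_int_1 of_int_add of_int_mult)
  have "x - (\<Sum>y\<in>Y. of_int (- t * a y) * y)
      = of_int t * (\<Sum>y\<in>insert x Y. of_int (a y) * y) + of_int r * (of_int p * x)"
  proof -
    have "x = (of_int t * of_int (a x) + of_int r * of_int p) * x"
      using bezout by simp
    then show ?thesis
      using False finY by (simp add: algebra_simps sum_distrib_left sum_negf)
  qed
  also have "\<dots> \<in> int_ideal K p"
    by (intro int_ideal_add int_ideal_int_mult[OF nf] a int_ideal_multiple x)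
  finally show ?thesis
    using that[of "\<lambda>y. - t * a y"] by blast
qed

lemma finite_residues_mod_int_ideal:
  assumes nf: "number_field K" and p: "prime p"
  obtains R where "finite R" "\<And>x. x \<in> ring_of_integers K \<Longrightarrow> \<exists>z\<in>R. x - z \<in> int_ideal K p"
proof -
  obtain N where "\<And>Y. independent_mod K p Y \<Longrightarrow> card Y \<le> N"
    using independent_mod_card_bounded[OF nf p] by blast
  moreover have "independent_mod K p {}"
    by (simp add: independent_mod_def)
  ultimately obtain Y where Y: "independent_mod K p Y"
    and maximal: "\<And>Z. independent_mod K p Z \<Longrightarrow> card Z \<le> card Y"
    using ex_has_greatest_nat[of "independent_mod K p" "{}" card "Suc N"] by (metis less_Suc_eq_le)
  have finY: "finite Y" and YO: "Y \<subseteq> ring_of_integers K"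
    using Y by (auto simp: independent_mod_def)
  define R where "R = (\<lambda>c. \<Sum>y\<in>Y. of_int (c y) * y) ` (Y \<rightarrow>\<^sub>E {0..<p})"
  have "\<exists>z\<in>R. x - z \<in> int_ideal K p" if x: "x \<in> ring_of_integers K" for x
  proof -
    obtain c where c: "x - (\<Sum>y\<in>Y. of_int (c y) * y) \<in> int_ideal K p"
      using maximal_independent_mod_spans[OF nf p Y maximal x] .
    have "x - (\<Sum>y\<in>Y. of_int (c y mod p) * y)
        = (x - (\<Sum>y\<in>Y. of_int (c y) * y))
          + ((\<Sum>y\<in>Y. of_int (c y) * y) - (\<Sum>y\<in>Y. of_int (c y mod p) * y))"
      by simp
    also have "\<dots> \<in> int_ideal K p"
      by (intro int_ideal_add c int_ideal_reduce_coeffs nf finY YO)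
    finally have "x - (\<Sum>y\<in>Y. of_int (restrict (\<lambda>y. c y mod p) Y y) * y) \<in> int_ideal K p"
      by simp
    moreover have "restrict (\<lambda>y. c y mod p) Y \<in> Y \<rightarrow>\<^sub>E {0..<p}"
      using prime_gt_0_int[OF p] by auto
    ultimately show ?thesis
      unfolding R_def by blast
  qed
  moreover have "finite R"
    unfolding R_def using finY by (intro finite_imageI finite_PiE) auto
  ultimately show ?thesis
    using that by blast
qed

lemma coset_eq_if_diff_in_ideal:
  assumes P: "is_ideal K P" and d: "x - z \<in> P"
  shows "(\<lambda>y. x + y) ` P = (\<lambda>y. z + y) ` P"
proof -
  have sub: "(\<lambda>y. u + y) ` P \<subseteq> (\<lambda>y. w + y) ` P" if "u - w \<in> P" for u w
  proof
    fix v assume "v \<in> (\<lambda>y. u + y) ` P"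
    then obtain q where "q \<in> P" "v = w + ((u - w) + q)"
      by auto
    then show "v \<in> (\<lambda>y. w + y) ` P"
      using ideal_add[OF P that] by blast
  qed
  have "z - x \<in> P"
    using ideal_uminus[OF P d] by simp
  then show ?thesis
    using sub d by blast
qed

lemma finite_cosets_if_contains_prime:
  assumes nf: "number_field K" and P: "is_ideal K P" and p: "prime p" "of_int p \<in> P"
  shows "finite ((\<lambda>x. (\<lambda>y. x + y) ` P) ` ring_of_integers K)"
proof -
  obtain R where R: "finite R" "\<And>x. x \<in> ring_of_integers K \<Longrightarrow> \<exists>z\<in>R. x - z \<in> int_ideal K p"
    using finite_residues_mod_int_ideal[OF nf p(1)] by blast
  have "(\<lambda>x. (\<lambda>y. x + y) ` P) ` ring_of_integers K \<subseteq> (\<lambda>z. (\<lambda>y. z + y) ` P) ` R"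
  proof (rule image_subsetI)
    fix x assume "x \<in> ring_of_integers K"
    then obtain z where z: "z \<in> R" "x - z \<in> int_ideal K p"
      using R(2) by blast
    then have "(\<lambda>y. x + y) ` P = (\<lambda>y. z + y) ` P"
      using int_ideal_subset[OF P p(2)] by (intro coset_eq_if_diff_in_ideal[OF P]) blast
    with z(1) show "(\<lambda>y. x + y) ` P \<in> (\<lambda>z. (\<lambda>y. z + y) ` P) ` R"
      by (intro image_eqI[where f = "\<lambda>z. (\<lambda>y. z + y) ` P"]) simp_all
  qed
  then show ?thesis
    by (rule finite_surj[OF R(1)])
qed

lemma abs_norm_ge_prime:
  assumes nf: "number_field K" and P: "P \<in> nonzero_primes K" and p: "prime p" "of_int p \<in> P"
  shows "nat p \<le> abs_norm K P"
proof -
  have ideal: "is_ideal K P" and "1 \<notin> P"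
    using P ideal_eq_ring_of_integers_if_one[of K P] by (auto simp: nonzero_primes_def)
  have "inj_on (\<lambda>i. (\<lambda>y. of_int i + y) ` P) {0..<p}"
  proof (rule inj_onI, rule ccontr)
    fix i j assume ij: "i \<in> {0..<p}" "j \<in> {0..<p}" "i \<noteq> j"
      and "(\<lambda>y. of_int i + y) ` P = (\<lambda>y. of_int j + y) ` P"
    then have "of_int i \<in> (\<lambda>y. of_int j + y) ` P"
      using ideal_zero[OF ideal] by (metis add.right_neutral image_eqI)
    then have "of_int (i - j) \<in> P"
      by auto
    have "\<not> p dvd i - j"
      using ij zdvd_imp_le[of p "\<bar>i - j\<bar>"] by auto
    then have "coprime (i - j) p"
      using p(1) by (simp add: prime_imp_coprime coprime_commute)
    then obtain u v where "u * (i - j) + v * p = 1"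
      using bezout_int[of "i - j" p] by (auto simp: coprime_iff_gcd_eq_1)
    then have "(1 :: complex) = of_int u * of_int (i - j) + of_int v * of_int p"
      by (metis of_int_1 of_int_add of_int_mult)
    also have "\<dots> \<in> P"
      using \<open>of_int (i - j) \<in> P\<close> p(2) by (intro ideal_add[OF ideal] ideal_int_mult[OF nf ideal])
    finally show False
      using \<open>1 \<notin> P\<close> by simp
  qed
  moreover have "(\<lambda>i. (\<lambda>y. of_int i + y) ` P) ` {0..<p} \<subseteq> (\<lambda>x. (\<lambda>y. x + y) ` P) ` ring_of_integers K"
    using of_int_in_ring_of_integers[OF nf] by auto
  ultimately have "card {0..<p} \<le> abs_norm K P"
    unfolding abs_norm_def by (rule card_inj_on_le[OF _ _ finite_cosets_if_contains_prime[OF nf ideal p]])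
  then show ?thesis
    by simp
qed

lemma abs_norm_nonzero_prime_ge_2:
  assumes "number_field K" "P \<in> nonzero_primes K"
  shows "abs_norm K P \<ge> 2"
proof -
  obtain p where p: "prime p" "of_int p \<in> P"
    using nonzero_prime_contains_prime[OF assms] .
  have "2 \<le> nat p"
    using prime_ge_2_int[OF p(1)] by linarith
  also have "\<dots> \<le> abs_norm K P"
    by (rule abs_norm_ge_prime[OF assms p])
  finally show ?thesis .
qed

lemma finite_ideals_containing_prime:
  assumes nf: "number_field K" and p: "prime p"
  shows "finite {P. is_ideal K P \<and> of_int p \<in> P}"
proof -
  obtain R where R: "finite R" "\<And>x. x \<in> ring_of_integers K \<Longrightarrow> \<exists>z\<in>R. x - z \<in> int_ideal K p"
    using finite_residues_mod_int_ideal[OF nf p] by blast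
  have sub: "P \<subseteq> Q" if P: "is_ideal K P" "of_int p \<in> P" and Q: "is_ideal K Q" "of_int p \<in> Q"
    and eq: "P \<inter> R = Q \<inter> R" for P Q
  proof
    fix x assume x: "x \<in> P"
    then obtain z where z: "z \<in> R" "x - z \<in> int_ideal K p"
      using R(2) ideal_subset[OF P(1)] by blast
    then have "x - z \<in> P" "x - z \<in> Q"
      using int_ideal_subset P Q by blast+
    have "x - (x - z) \<in> P"
      by (rule ideal_diff[OF P(1) x \<open>x - z \<in> P\<close>])
    then have "z \<in> P \<inter> R"
      using z(1) by simp
    then have "z \<in> Q"
      using eq by blast
    then show "x \<in> Q"
      using ideal_add[OF Q(1) \<open>z \<in> Q\<close> \<open>x - z \<in> Q\<close>] by simp
  qed
  have "inj_on (\<lambda>P. P \<inter> R) {P. is_ideal K P \<and> of_int p \<in> P}"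
    by (rule inj_onI) (metis (no_types, lifting) mem_Collect_eq subset_antisym sub)
  then show ?thesis
    by (rule inj_on_finite[where B = "Pow R"]) (use R(1) in auto)
qed

lemma finite_nonzero_primes_abs_norm_le:
  assumes nf: "number_field K"
  shows "finite {P \<in> nonzero_primes K. real (abs_norm K P) \<le> x}"
proof (rule finite_subset)
  show "{P \<in> nonzero_primes K. real (abs_norm K P) \<le> x}
      \<subseteq> (\<Union>p\<in>{p. prime p \<and> p \<le> \<lfloor>x\<rfloor>}. {P. is_ideal K P \<and> of_int p \<in> P})"
  proof (rule subsetI)
    fix P assume "P \<in> {P \<in> nonzero_primes K. real (abs_norm K P) \<le> x}"
    then have P: "P \<in> nonzero_primes K" "real (abs_norm K P) \<le> x"
      by simp_all
    obtain p where p: "prime p" "of_int p \<in> P"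
      using nonzero_prime_contains_prime[OF nf P(1)] .
    have "real_of_int p \<le> x"
      using abs_norm_ge_prime[OF nf P(1) p] P(2) prime_ge_0_int[OF p(1)] by linarith
    then have "p \<in> {p. prime p \<and> p \<le> \<lfloor>x\<rfloor>}"
      using p(1) by (simp add: le_floor_iff)
    moreover have "P \<in> {P. is_ideal K P \<and> of_int p \<in> P}"
      using P(1) p(2) by (simp add: nonzero_primes_def)
    ultimately show "P \<in> (\<Union>p\<in>{p. prime p \<and> p \<le> \<lfloor>x\<rfloor>}. {P. is_ideal K P \<and> of_int p \<in> P})"
      by (rule UN_I)
  qed
  have "{p. prime p \<and> p \<le> \<lfloor>x\<rfloor>} \<subseteq> {0..\<lfloor>x\<rfloor>}"
    using prime_ge_0_int by auto
  then show "finite (\<Union>p\<in>{p. prime p \<and> p \<le> \<lfloor>x\<rfloor>}. {P. is_ideal K P \<and> of_int p \<in> P})"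
    by (intro finite_UN_I finite_ideals_containing_prime[OF nf]) (auto intro: finite_subset)
qed

section \<open>Base-\<open>b\<close> expansions with a given prefix\<close>

declare base_digits.simps [simp del]

lemma base_digits_less: "n < b \<Longrightarrow> base_digits b n = [n]"
  by (simp add: base_digits.simps)

lemma base_digits_ge: "2 \<le> b \<Longrightarrow> b \<le> n \<Longrightarrow> base_digits b n = base_digits b (n div b) @ [n mod b]"
  by (subst base_digits.simps) simp

lemma digit_value_snoc: "digit_value b (xs @ [d]) = b * digit_value b xs + d"
proof -
  have "(\<Sum>i<length xs. xs ! i * b ^ (length xs - i)) = b * digit_value b xs"
    unfolding digit_value_def sum_distrib_left
    by (rule sum.cong) (simp_all add: Suc_diff_Suc flip: power_Suc)
  then show ?thesis
    by (simp add: digit_value_def nth_append)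
qed

lemma digit_value_append:
  "digit_value b (xs @ ys) = digit_value b xs * b ^ length ys + digit_value b ys"
proof (induction ys rule: rev_induct)
  case (snoc y ys)
  have "digit_value b (xs @ ys @ [y]) = b * digit_value b (xs @ ys) + y"
    using digit_value_snoc[of b "xs @ ys" y] by simp
  with snoc show ?case
    by (simp add: digit_value_snoc algebra_simps)
qed (simp add: digit_value_def)

lemma digit_value_less_power: "\<forall>a\<in>set xs. a < b \<Longrightarrow> digit_value b xs < b ^ length xs"
proof (induction xs rule: rev_induct)
  case (snoc x xs)
  then have "b * digit_value b xs + b \<le> b * b ^ length xs"
    by (metis Suc_leI add_mult_distrib2 butlast_snoc in_set_butlastD mult.right_neutral
        mult_le_mono2 plus_1_eq_Suc add.commute)
  then show ?case
    using snoc.prems by (simp add: digit_value_snoc)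
qed (simp add: digit_value_def)

lemma digit_value_base_digits: "2 \<le> b \<Longrightarrow> digit_value b (base_digits b n) = n"
proof (induction b n rule: base_digits.induct)
  case (1 b n)
  show ?case
  proof (cases "n < b")
    case True
    then show ?thesis
      by (simp add: base_digits_less digit_value_def)
  next
    case False
    then show ?thesis
      using 1 by (simp add: base_digits_ge digit_value_snoc)
  qed
qed

lemma base_digits_less_base: "2 \<le> b \<Longrightarrow> a \<in> set (base_digits b n) \<Longrightarrow> a < b"
proof (induction b n rule: base_digits.induct)
  case (1 b n)
  then show ?case
    by (cases "n < b") (auto simp: base_digits_less base_digits_ge)
qed

lemma base_digits_div_power:
  assumes "2 \<le> b" "b ^ k \<le> n"
  shows "\<exists>ys. base_digits b n = base_digits b (n div b ^ k) @ ys"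
  using assms(2)
proof (induction k arbitrary: n)
  case (Suc k)
  have "b ^ k \<le> n div b"
    using Suc.prems assms(1) by (simp add: less_eq_div_iff_mult_less_eq mult.commute)
  moreover have "b \<le> n"
    using Suc.prems assms(1) order.trans[of b "b ^ Suc k" n] by (simp add: self_le_power)
  ultimately show ?case
    using Suc.IH[of "n div b"] base_digits_ge[OF assms(1)] by (auto simp: div_mult2_eq)
qed simp

lemma base_digits_digit_value:
  assumes "2 \<le> b" "S \<noteq> []" "\<forall>a\<in>set S. a < b" "S ! 0 \<noteq> 0"
  shows "base_digits b (digit_value b S) = S"
  using assms(2-)
proof (induction S rule: rev_induct)
  case (snoc d S)
  show ?case
  proof (cases "S = []")
    case True
    then show ?thesis
      using snoc.prems by (simp add: digit_value_def base_digits_less)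
  next
    case False
    then have IH: "base_digits b (digit_value b S) = S"
      using snoc by (simp add: nth_append)
    have "digit_value b S \<noteq> 0"
    proof
      assume "digit_value b S = 0"
      then have "S = [0]"
        using IH assms(1) base_digits_less[of 0 b] by simp
      then show False
        using snoc.prems(3) by simp
    qed
    then have "b * 1 \<le> b * digit_value b S"
      by (intro mult_le_mono2) simp
    then have "b \<le> digit_value b (S @ [d])"
      by (simp add: digit_value_snoc trans_le_add1)
    moreover have "d < b"
      using snoc.prems by simp
    ultimately show ?thesis
      using IH base_digits_ge[OF assms(1)] by (simp add: digit_value_snoc)
  qed
qed simp

lemma digit_value_pos:
  assumes "2 \<le> b" "S \<noteq> []" "\<forall>a\<in>set S. a < b" "S ! 0 \<noteq> 0"
  shows "digit_value b S > 0"
proof (rule ccontr)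
  assume "\<not> digit_value b S > 0"
  then have "S = [0]"
    using base_digits_digit_value[OF assms] assms(1) base_digits_less[of 0 b] by simp
  then show False
    using assms(4) by simp
qed

definition leading_digits_set :: "nat \<Rightarrow> nat \<Rightarrow> nat set" where
  "leading_digits_set b s = (\<Union>k. {s * b ^ k..<(s + 1) * b ^ k})"

lemma prefix_base_digits_iff:
  assumes b: "2 \<le> b" and S: "S \<noteq> []" "\<forall>a\<in>set S. a < b" "S ! 0 \<noteq> 0"
  shows "prefix S (base_digits b n) \<longleftrightarrow> n \<in> leading_digits_set b (digit_value b S)"
proof
  assume "prefix S (base_digits b n)"
  then obtain ys where ys: "base_digits b n = S @ ys"
    by (auto simp: prefix_def)
  then have "n = digit_value b S * b ^ length ys + digit_value b ys"
    using digit_value_base_digits[OF b, of n] by (simp add: digit_value_append)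
  moreover have "digit_value b ys < b ^ length ys"
    using base_digits_less_base[OF b, of _ n] ys by (intro digit_value_less_power) simp
  ultimately show "n \<in> leading_digits_set b (digit_value b S)"
    unfolding leading_digits_set_def by (intro UN_I[of "length ys"]) auto
next
  assume "n \<in> leading_digits_set b (digit_value b S)"
  then obtain k where k: "digit_value b S * b ^ k \<le> n" "n < (digit_value b S + 1) * b ^ k"
    by (auto simp: leading_digits_set_def)
  then have "n div b ^ k = digit_value b S"
    by (intro div_nat_eqI) (simp_all add: mult.commute)
  moreover have "1 * b ^ k \<le> digit_value b S * b ^ k"
    using digit_value_pos[OF b S] by (intro mult_le_mono1) simp
  then have "b ^ k \<le> n"
    using k(1) by linarith
  ultimately show "prefix S (base_digits b n)"
    using base_digits_div_power[OF b] base_digits_digit_value[OF b S] by (metis prefixI)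
qed

lemma leading_digits_blocks_disjoint:
  fixes b s :: nat
  assumes "2 \<le> b" "1 \<le> s" "j < k"
  shows "(s + 1) * b ^ j \<le> s * b ^ k"
proof -
  have "s + 1 \<le> s * b"
    using assms(1,2) mult_le_mono2[of 2 b s] by linarith
  then have "(s + 1) * b ^ j \<le> (s * b) * b ^ j"
    by (rule mult_right_mono) simp
  also have "\<dots> \<le> s * b ^ k"
    using assms by (simp add: mult.assoc power_increasing flip: power_Suc)
  finally show ?thesis .
qed

lemma leading_digits_set_lessThan:
  assumes "2 \<le> b" "1 \<le> s"
  shows "{..<(s + 1) * b ^ K} \<inter> leading_digits_set b s = (\<Union>k\<le>K. {s * b ^ k..<(s + 1) * b ^ k})"
proof (intro equalityI subsetI)
  fix n assume "n \<in> {..<(s + 1) * b ^ K} \<inter> leading_digits_set b s"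
  then obtain k where k: "s * b ^ k \<le> n" "n < (s + 1) * b ^ k" and n: "n < (s + 1) * b ^ K"
    by (auto simp: leading_digits_set_def)
  have "k \<le> K"
    using leading_digits_blocks_disjoint[OF assms, of K k] k(1) n by (meson le_less_trans not_le)
  then show "n \<in> (\<Union>k\<le>K. {s * b ^ k..<(s + 1) * b ^ k})"
    using k by auto
next
  fix n assume "n \<in> (\<Union>k\<le>K. {s * b ^ k..<(s + 1) * b ^ k})"
  then obtain k where "k \<le> K" "s * b ^ k \<le> n" "n < (s + 1) * b ^ k"
    by auto
  moreover have "(s + 1) * b ^ k \<le> (s + 1) * b ^ K"
    using assms(1) \<open>k \<le> K\<close> by (intro mult_le_mono2 power_increasing) auto
  ultimately show "n \<in> {..<(s + 1) * b ^ K} \<inter> leading_digits_set b s"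
    by (auto simp: leading_digits_set_def)
qed

lemma sum_leading_digits_lessThan:
  assumes "2 \<le> b" "1 \<le> s"
  shows "sum g ({..<(s + 1) * b ^ K} \<inter> leading_digits_set b s)
       = (\<Sum>k\<le>K. \<Sum>n\<in>{s * b ^ k..<(s + 1) * b ^ k}. g n)"
  unfolding leading_digits_set_lessThan[OF assms]
proof (rule sum.UNION_disjoint)
  show "\<forall>j\<in>{..K}. \<forall>k\<in>{..K}. j \<noteq> k \<longrightarrow>
      {s * b ^ j..<(s + 1) * b ^ j} \<inter> {s * b ^ k..<(s + 1) * b ^ k} = {}"
    using leading_digits_blocks_disjoint[OF assms] by (fastforce simp: neq_iff)
qed auto

section \<open>Logarithmic averages over leading-digit blocks\<close>

lemma harmonic_weighted_sum_bound:
  fixes w :: "nat \<Rightarrow> real"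
  assumes small: "\<And>k. k \<ge> J \<Longrightarrow> \<bar>w k\<bar> \<le> \<epsilon>" and "\<epsilon> \<ge> 0" and "K \<ge> 1"
  shows "\<bar>\<Sum>k=1..K. w k / real k\<bar> \<le> (\<Sum>k<J. \<bar>w k\<bar>) + \<epsilon> * (ln (real K) + 1)"
proof -
  have "\<bar>\<Sum>k=1..K. w k / real k\<bar> \<le> (\<Sum>k=1..K. (if k < J then \<bar>w k\<bar> else 0) + \<epsilon> / real k)"
  proof (rule order_trans[OF sum_abs sum_mono])
    fix k assume "k \<in> {1..K}"
    then have k: "real k \<ge> 1"
      by simp
    have abs_eq: "\<bar>w k / real k\<bar> = \<bar>w k\<bar> / real k"
      by (simp add: abs_divide)
    have "0 \<le> \<epsilon> / real k"
      using \<open>\<epsilon> \<ge> 0\<close> by simp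
    show "\<bar>w k / real k\<bar> \<le> (if k < J then \<bar>w k\<bar> else 0) + \<epsilon> / real k"
    proof (cases "k < J")
      case True
      have "\<bar>w k\<bar> / real k \<le> \<bar>w k\<bar>"
        using k by (simp add: divide_le_eq mult_le_cancel_left1)
      then show ?thesis
        using True abs_eq \<open>0 \<le> \<epsilon> / real k\<close> by simp
    next
      case False
      then have "\<bar>w k\<bar> / real k \<le> \<epsilon> / real k"
        using small[of k] by (intro divide_right_mono) simp_all
      then show ?thesis
        using False abs_eq by simp
    qed
  qed
  also have "\<dots> = (\<Sum>k=1..K. if k < J then \<bar>w k\<bar> else 0) + \<epsilon> * harm K"
    by (simp only: sum.distrib harm_def sum_distrib_left divide_inverse mult_1_right)
  also have "\<dots> \<le> (\<Sum>k<J. \<bar>w k\<bar>) + \<epsilon> * (ln (real K) + 1)"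
  proof (rule add_mono)
    have "(\<Sum>k=1..K. if k < J then \<bar>w k\<bar> else 0) = (\<Sum>k\<in>{k\<in>{1..K}. k < J}. \<bar>w k\<bar>)"
      by (rule sum.inter_filter[symmetric]) simp
    also have "\<dots> \<le> (\<Sum>k<J. \<bar>w k\<bar>)"
      by (rule sum_mono2) auto
    finally show "(\<Sum>k=1..K. if k < J then \<bar>w k\<bar> else 0) \<le> (\<Sum>k<J. \<bar>w k\<bar>)" .
    show "\<epsilon> * harm K \<le> \<epsilon> * (ln (real K) + 1)"
      using euler_mascheroni_sequence_decreasing[of 1 K] \<open>\<epsilon> \<ge> 0\<close> \<open>K \<ge> 1\<close>
      by (intro mult_left_mono) (simp_all add: harm_def)
  qed
  finally show ?thesis .
qed

lemma tendsto_zero_log_mean: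
  fixes w :: "nat \<Rightarrow> real"
  assumes w: "w \<longlonglongrightarrow> 0"
  shows "(\<lambda>K. (\<Sum>k=1..K. w k / real k) / ln (real K)) \<longlonglongrightarrow> 0"
proof (rule tendstoI)
  fix r :: real assume "r > 0"
  obtain J where J: "\<And>k. k \<ge> J \<Longrightarrow> \<bar>w k\<bar> \<le> r / 2"
    using tendstoD[OF w, of "r / 2"] \<open>r > 0\<close> by (force simp: eventually_sequentially)
  define A where "A = (\<Sum>k<J. \<bar>w k\<bar>)"
  have "(\<lambda>K. (A + r / 2) / ln (real K)) \<longlonglongrightarrow> 0"
    by real_asymp
  then have "eventually (\<lambda>K. (A + r / 2) / ln (real K) < r / 2) sequentially"
    using \<open>r > 0\<close> by (auto dest: order_tendstoD(2)[of _ 0 _ "r / 2"])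
  moreover have "eventually (\<lambda>K. ln (real K) > 0) sequentially"
    by real_asymp
  ultimately show "eventually (\<lambda>K. dist ((\<Sum>k=1..K. w k / real k) / ln (real K)) 0 < r) sequentially"
    using eventually_ge_at_top[of 1]
  proof eventually_elim
    case (elim K)
    have "\<bar>(\<Sum>k=1..K. w k / real k) / ln (real K)\<bar> \<le> (A + r / 2 * (ln (real K) + 1)) / ln (real K)"
      using harmonic_weighted_sum_bound[OF J _ elim(3)] \<open>r > 0\<close> elim(2)
      by (simp add: A_def abs_divide divide_right_mono)
    also have "\<dots> = (A + r / 2) / ln (real K) + r / 2"
      using elim(2) by (simp add: field_simps)
    finally have "\<bar>(\<Sum>k=1..K. w k / real k) / ln (real K)\<bar> < r"
      using elim(1) by linarith
    then show ?case
      by (simp add: dist_real_def)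
  qed
qed

lemma ln_ln_geometric_difference:
  fixes B c d :: real
  assumes "B > 1" "c > 0" "d > 0"
  shows "(\<lambda>k. real k * (ln (ln (d * B ^ k - 1)) - ln (ln (c * B ^ k - 1)))) \<longlonglongrightarrow> (ln d - ln c) / ln B"
proof -
  have "(\<lambda>k. real k * (ln (ln (d * B ^ k - 1)) - ln (ln (c * B ^ k - 1))))
      \<longlonglongrightarrow> inverse (ln B) * ln d - inverse (ln B) * ln c"
    using assms by real_asymp
  then show ?thesis
    by (simp add: divide_inverse algebra_simps)
qed

lemma smallo_inv_ln_along_geometric:
  fixes E :: "real \<Rightarrow> real" and B c :: real
  assumes E: "E \<in> o(\<lambda>x. 1 / ln x)" and "B > 1" "c > 0"
  shows "(\<lambda>k. real k * E (c * B ^ k - 1)) \<longlonglongrightarrow> 0"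
proof -
  have "((\<lambda>x. E x * ln x) \<longlongrightarrow> 0) at_top"
    using smalloD_tendsto[OF E] by simp
  moreover have "filterlim (\<lambda>k. c * B ^ k - 1) at_top sequentially"
    using assms(2,3) by real_asymp
  ultimately have "(\<lambda>k. E (c * B ^ k - 1) * ln (c * B ^ k - 1)) \<longlonglongrightarrow> 0"
    by (rule filterlim_compose)
  moreover have "(\<lambda>k. real k / ln (c * B ^ k - 1)) \<longlonglongrightarrow> inverse (ln B)"
    using assms(2,3) by real_asymp
  ultimately have "(\<lambda>k. E (c * B ^ k - 1) * ln (c * B ^ k - 1) * (real k / ln (c * B ^ k - 1)))
      \<longlonglongrightarrow> 0"
    using tendsto_mult by fastforce
  moreover have "eventually (\<lambda>k. ln (c * B ^ k - 1) > 0) sequentially"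
    using assms(2,3) by real_asymp
  then have "eventually (\<lambda>k. E (c * B ^ k - 1) * ln (c * B ^ k - 1) * (real k / ln (c * B ^ k - 1))
      = real k * E (c * B ^ k - 1)) sequentially"
    by eventually_elim simp
  ultimately show ?thesis
    by (rule Lim_transform_eventually)
qed

lemma harm_over_ln_tendsto: "(\<lambda>K. harm K / ln (real K) :: real) \<longlonglongrightarrow> 1"
proof -
  have "(\<lambda>K. 1 + (harm K - ln (real K)) / ln (real K) :: real) \<longlonglongrightarrow> 1 + 0"
    by (intro tendsto_intros tendsto_divide_0[OF euler_mascheroni_LIMSEQ]) real_asymp
  moreover have "eventually (\<lambda>K. ln (real K) > 0) sequentially"
    by real_asymp
  then have "eventually (\<lambda>K. 1 + (harm K - ln (real K)) / ln (real K) = harm K / ln (real K)) sequentially"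
    by eventually_elim (simp add: field_simps)
  ultimately show ?thesis
    by (simp add: Lim_transform_eventually)
qed

lemma log_cesaro:
  fixes a :: "nat \<Rightarrow> real"
  assumes lim: "(\<lambda>k. real k * a k) \<longlonglongrightarrow> L"
  shows "(\<lambda>K. (\<Sum>k\<le>K. a k) / ln (real K)) \<longlonglongrightarrow> L"
proof -
  define w where "w = (\<lambda>k. real k * a k - L)"
  have w: "w \<longlonglongrightarrow> 0"
    using tendsto_diff[OF lim tendsto_const[of L]] by (simp add: w_def)
  have split: "(\<Sum>k\<le>K. a k) = a 0 + L * harm K + (\<Sum>k=1..K. w k / real k)" for K
  proof -
    have "{..K} = insert 0 {1..K}"
      by auto
    then have "(\<Sum>k\<le>K. a k) = a 0 + (\<Sum>k=1..K. a k)"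
      by simp
    also have "(\<Sum>k=1..K. a k) = (\<Sum>k=1..K. L * inverse (real k) + w k / real k)"
      by (rule sum.cong) (auto simp: w_def field_simps)
    also have "\<dots> = L * harm K + (\<Sum>k=1..K. w k / real k)"
      by (simp only: sum.distrib sum_distrib_left harm_def)
    finally show ?thesis
      by simp
  qed
  have "(\<lambda>K. a 0 / ln (real K)) \<longlonglongrightarrow> 0"
    by real_asymp
  then have "(\<lambda>K. a 0 / ln (real K) + L * (harm K / ln (real K)) + (\<Sum>k=1..K. w k / real k) / ln (real K))
      \<longlonglongrightarrow> 0 + L * 1 + 0"
    by (intro tendsto_intros harm_over_ln_tendsto tendsto_zero_log_mean[OF w])
  then show ?thesis
    unfolding split by (simp add: add_divide_distrib)
qed

lemma sum_atLeastLessThan_eq_diff_partial_sums: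
  fixes g :: "nat \<Rightarrow> real"
  assumes "1 \<le> m" "m \<le> n"
  shows "(\<Sum>k\<in>{m..<n}. g k) = (\<Sum>k\<le>nat \<lfloor>real n - 1\<rfloor>. g k) - (\<Sum>k\<le>nat \<lfloor>real m - 1\<rfloor>. g k)"
proof -
  have "{..nat \<lfloor>real j - 1\<rfloor>} = {0..<j}" if "1 \<le> j" for j
    using that by (auto simp: nat_le_iff floor_le_iff)
  then show ?thesis
    using assms sum_diff_nat_ivl[of 0 m n g] by simp
qed

lemma block_sums_tendsto:
  fixes g :: "nat \<Rightarrow> real" and b s :: nat
  assumes hyp: "(\<lambda>x. (\<Sum>n\<le>nat \<lfloor>x\<rfloor>. g n) - (\<delta> * ln (ln x) + C)) \<in> o(\<lambda>x. 1 / ln x)"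
    and b: "2 \<le> b" and s: "1 \<le> s"
  shows "(\<lambda>k. real k * (\<Sum>n\<in>{s * b ^ k..<(s + 1) * b ^ k}. g n)) \<longlonglongrightarrow> \<delta> * log b (1 + 1 / real s)"
proof -
  define E where "E x = (\<Sum>n\<le>nat \<lfloor>x\<rfloor>. g n) - (\<delta> * ln (ln x) + C)" for x
  have E: "E \<in> o(\<lambda>x. 1 / ln x)"
    using hyp by (simp add: E_def[abs_def])
  have "1 \<le> s * b ^ k" for k
    using b s by simp
  then have block: "real k * (\<Sum>n\<in>{s * b ^ k..<(s + 1) * b ^ k}. g n)
      = \<delta> * (real k * (ln (ln ((real s + 1) * real b ^ k - 1)) - ln (ln (real s * real b ^ k - 1))))
        + real k * E ((real s + 1) * real b ^ k - 1) - real k * E (real s * real b ^ k - 1)" for k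
    by (subst sum_atLeastLessThan_eq_diff_partial_sums) (simp_all add: E_def algebra_simps)
  have "(\<lambda>k. \<delta> * (real k * (ln (ln ((real s + 1) * real b ^ k - 1)) - ln (ln (real s * real b ^ k - 1))))
        + real k * E ((real s + 1) * real b ^ k - 1) - real k * E (real s * real b ^ k - 1))
      \<longlonglongrightarrow> \<delta> * ((ln (real s + 1) - ln (real s)) / ln (real b)) + 0 - 0"
    using b s
    by (intro tendsto_intros ln_ln_geometric_difference smallo_inv_ln_along_geometric[OF E]) simp_all
  moreover have "1 + 1 / real s = (real s + 1) / real s"
    using s by (simp add: field_simps)
  then have "(ln (real s + 1) - ln (real s)) / ln (real b) = log b (1 + 1 / real s)"
    using s by (simp add: log_def ln_div)
  ultimately show ?thesis
    unfolding block by simp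
qed

lemma sum_leading_digits_power_tendsto:
  fixes g :: "nat \<Rightarrow> real" and b s :: nat
  assumes hyp: "(\<lambda>x. (\<Sum>n\<le>nat \<lfloor>x\<rfloor>. g n) - (\<delta> * ln (ln x) + C)) \<in> o(\<lambda>x. 1 / ln x)"
    and b: "2 \<le> b" and s: "1 \<le> s"
  shows "(\<lambda>K. sum g ({..<(s + 1) * b ^ K} \<inter> leading_digits_set b s) / ln (real K))
      \<longlonglongrightarrow> \<delta> * log b (1 + 1 / real s)"
  unfolding sum_leading_digits_lessThan[OF b s] by (rule log_cesaro[OF block_sums_tendsto[OF hyp b s]])

lemma ln_over_ln_ln_tendsto_if_close_to_log:
  fixes \<psi> :: "real \<Rightarrow> nat" and B c\<^sub>1 c\<^sub>2 :: real
  assumes B: "B > 1"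
    and lower: "eventually (\<lambda>x. log B x + c\<^sub>1 \<le> real (\<psi> x)) at_top"
    and upper: "eventually (\<lambda>x. real (\<psi> x) \<le> log B x + c\<^sub>2) at_top"
  shows "((\<lambda>x. ln (real (\<psi> x)) / ln (ln x)) \<longlongrightarrow> 1) at_top"
proof -
  have lims: "((\<lambda>x. ln (log B x + c\<^sub>1) / ln (ln x)) \<longlongrightarrow> 1) at_top"
    "((\<lambda>x. ln (log B x + c\<^sub>2) / ln (ln x)) \<longlongrightarrow> 1) at_top"
    using B by (real_asymp simp: log_def)+
  have "eventually (\<lambda>x. log B x + c\<^sub>1 > 0) at_top"
    using B by (real_asymp simp: log_def)
  moreover have "eventually (\<lambda>x::real. ln (ln x) > 0) at_top"
    by real_asymp
  ultimately have pos: "eventually (\<lambda>x. log B x + c\<^sub>1 > 0 \<and> ln (ln x) > 0) at_top"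
    by (simp add: eventually_conj)
  have "eventually (\<lambda>x. ln (log B x + c\<^sub>1) / ln (ln x) \<le> ln (real (\<psi> x)) / ln (ln x)) at_top"
    using lower pos
  proof eventually_elim
    case (elim x)
    then have "ln (log B x + c\<^sub>1) \<le> ln (real (\<psi> x))"
      by simp
    then show ?case
      using elim by (simp add: divide_right_mono)
  qed
  moreover have "eventually (\<lambda>x. ln (real (\<psi> x)) / ln (ln x) \<le> ln (log B x + c\<^sub>2) / ln (ln x)) at_top"
    using lower upper pos
  proof eventually_elim
    case (elim x)
    then have "ln (real (\<psi> x)) \<le> ln (log B x + c\<^sub>2)"
      by simp
    then show ?case
      using elim by (simp add: divide_right_mono)
  qed
  ultimately show ?thesis
    using lims by (rule tendsto_sandwich)
qed

lemma tendsto_over_ln_ln_compose: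
  fixes T :: "nat \<Rightarrow> real" and \<psi> :: "real \<Rightarrow> nat" and B c\<^sub>1 c\<^sub>2 :: real
  assumes T: "(\<lambda>k. T k / ln (real k)) \<longlonglongrightarrow> L" and B: "B > 1"
    and lower: "eventually (\<lambda>x. log B x + c\<^sub>1 \<le> real (\<psi> x)) at_top"
    and upper: "eventually (\<lambda>x. real (\<psi> x) \<le> log B x + c\<^sub>2) at_top"
  shows "((\<lambda>x. T (\<psi> x) / ln (ln x)) \<longlongrightarrow> L) at_top"
proof -
  have "filterlim (\<lambda>x. log B x + c\<^sub>1) at_top at_top"
    using B by real_asymp
  then have "filterlim (\<lambda>x. real (\<psi> x)) at_top at_top"
    by (rule filterlim_at_top_mono[OF _ lower])
  then have \<psi>: "filterlim \<psi> sequentially at_top"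
    by (simp add: filterlim_sequentially_iff_filterlim_real)
  have "((\<lambda>x. T (\<psi> x) / ln (real (\<psi> x)) * (ln (real (\<psi> x)) / ln (ln x))) \<longlongrightarrow> L * 1) at_top"
    by (intro tendsto_mult filterlim_compose[OF T \<psi>] ln_over_ln_ln_tendsto_if_close_to_log[OF B lower upper])
  moreover have "eventually (\<lambda>x. \<psi> x \<ge> 2) at_top"
    using \<psi> by (simp add: filterlim_at_top)
  then have "eventually (\<lambda>x. T (\<psi> x) / ln (real (\<psi> x)) * (ln (real (\<psi> x)) / ln (ln x))
      = T (\<psi> x) / ln (ln x)) at_top"
    by eventually_elim simp
  ultimately show ?thesis
    by (simp add: Lim_transform_eventually)
qed

lemma floor_log_power_bounds:
  fixes B x :: real
  assumes "B > 1" "x \<ge> 1"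
  shows "B ^ nat \<lfloor>log B x\<rfloor> \<le> x" "x < B ^ (nat \<lfloor>log B x\<rfloor> + 1)"
proof -
  define k where "k = nat \<lfloor>log B x\<rfloor>"
  have "\<lfloor>log B x\<rfloor> = int k"
    using assms by (simp add: k_def)
  then have "B powr real k \<le> x" "x < B powr (real k + 1)"
    using floor_log_eq_powr_iff[of x B "int k"] assms by simp_all
  then show "B ^ nat \<lfloor>log B x\<rfloor> \<le> x" "x < B ^ (nat \<lfloor>log B x\<rfloor> + 1)"
    using assms unfolding k_def[symmetric] by (simp_all add: powr_add powr_realpow mult.commute)
qed

lemma sum_leading_digits_floor_bounds:
  fixes g :: "nat \<Rightarrow> real" and b s :: nat
  assumes nonneg: "\<And>n. 0 \<le> g n" and b: "2 \<le> b" and s: "1 \<le> s" and x: "real b ^ s \<le> x"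
  shows "sum g ({..<(s + 1) * b ^ (nat \<lfloor>log b x\<rfloor> - s)} \<inter> leading_digits_set b s)
      \<le> sum g ({..nat \<lfloor>x\<rfloor>} \<inter> leading_digits_set b s)"
    and "sum g ({..nat \<lfloor>x\<rfloor>} \<inter> leading_digits_set b s)
      \<le> sum g ({..<(s + 1) * b ^ (nat \<lfloor>log b x\<rfloor> + 1)} \<inter> leading_digits_set b s)"
proof -
  define k where "k = nat \<lfloor>log b x\<rfloor>"
  have mono: "sum g (A \<inter> leading_digits_set b s) \<le> sum g (A' \<inter> leading_digits_set b s)"
    if "A \<subseteq> A'" "finite A'" for A A'
    using that nonneg by (intro sum_mono2) auto
  have "1 \<le> real b ^ s"
    using b by simp
  then have "1 \<le> x"
    using x by linarith
  then have pow: "real b ^ k \<le> x" "x < real b ^ (k + 1)"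
    using floor_log_power_bounds[of b x] b unfolding k_def by simp_all
  have "real s \<le> log b x"
    using x b \<open>1 \<le> x\<close> by (simp add: le_log_iff powr_realpow)
  then have "s \<le> k"
    unfolding k_def by linarith
  have "s + 1 \<le> 2 ^ s"
    by (simp add: Suc_leI less_exp)
  also have "\<dots> \<le> b ^ s"
    using b by (simp add: power_mono)
  finally have "(s + 1) * b ^ (k - s) \<le> b ^ s * b ^ (k - s)"
    by (rule mult_right_mono) simp
  also have "\<dots> = b ^ k"
    using \<open>s \<le> k\<close> by (simp flip: power_add)
  also have "\<dots> \<le> nat \<lfloor>x\<rfloor>"
    using pow(1) by (simp add: le_nat_floor flip: of_nat_power)
  finally have "{..<(s + 1) * b ^ (k - s)} \<subseteq> {..nat \<lfloor>x\<rfloor>}"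
    by auto
  then show "sum g ({..<(s + 1) * b ^ (nat \<lfloor>log b x\<rfloor> - s)} \<inter> leading_digits_set b s)
      \<le> sum g ({..nat \<lfloor>x\<rfloor>} \<inter> leading_digits_set b s)"
    unfolding k_def by (rule mono) simp
  have "real (nat \<lfloor>x\<rfloor>) \<le> x"
    using \<open>1 \<le> x\<close> by linarith
  also have "x < real b ^ (k + 1)"
    by (rule pow(2))
  finally have "nat \<lfloor>x\<rfloor> < b ^ (k + 1)"
    by (simp only: of_nat_power[symmetric] of_nat_less_iff)
  also have "\<dots> \<le> (s + 1) * b ^ (k + 1)"
    by simp
  finally have "{..nat \<lfloor>x\<rfloor>} \<subseteq> {..<(s + 1) * b ^ (k + 1)}"
    by auto
  then show "sum g ({..nat \<lfloor>x\<rfloor>} \<inter> leading_digits_set b s)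
      \<le> sum g ({..<(s + 1) * b ^ (nat \<lfloor>log b x\<rfloor> + 1)} \<inter> leading_digits_set b s)"
    unfolding k_def by (rule mono) simp
qed

theorem leading_digits_sum_over_ln_ln_tendsto:
  fixes g :: "nat \<Rightarrow> real" and b s :: nat
  assumes nonneg: "\<And>n. 0 \<le> g n"
    and hyp: "(\<lambda>x. (\<Sum>n\<le>nat \<lfloor>x\<rfloor>. g n) - (\<delta> * ln (ln x) + C)) \<in> o(\<lambda>x. 1 / ln x)"
    and b: "2 \<le> b" and s: "1 \<le> s"
  shows "((\<lambda>x. sum g ({..nat \<lfloor>x\<rfloor>} \<inter> leading_digits_set b s) / ln (ln x))
      \<longlongrightarrow> \<delta> * log b (1 + 1 / real s)) at_top"
proof -
  define T where "T K = sum g ({..<(s + 1) * b ^ K} \<inter> leading_digits_set b s)" for K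
  define \<phi> where "\<phi> x = nat \<lfloor>log b x\<rfloor>" for x :: real
  have T: "(\<lambda>K. T K / ln (real K)) \<longlonglongrightarrow> \<delta> * log b (1 + 1 / real s)"
    unfolding T_def by (rule sum_leading_digits_power_tendsto[OF hyp b s])
  have \<phi>: "real (\<phi> x) \<le> log b x" "log b x < real (\<phi> x) + 1" if "x \<ge> 1" for x
    using that b by (simp_all add: \<phi>_def)
  have lim_upper: "((\<lambda>x. T (\<phi> x + 1) / ln (ln x)) \<longlongrightarrow> \<delta> * log b (1 + 1 / real s)) at_top"
  proof (rule tendsto_over_ln_ln_compose[OF T, where B = b and c\<^sub>1 = 0 and c\<^sub>2 = 1])
    show "eventually (\<lambda>x. log b x + 0 \<le> real (\<phi> x + 1)) at_top"
      "eventually (\<lambda>x. real (\<phi> x + 1) \<le> log b x + 1) at_top"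
      using eventually_ge_at_top[of 1] by (eventually_elim, use \<phi> in force)+
  qed (use b in simp)
  have lim_lower: "((\<lambda>x. T (\<phi> x - s) / ln (ln x)) \<longlongrightarrow> \<delta> * log b (1 + 1 / real s)) at_top"
  proof (rule tendsto_over_ln_ln_compose[OF T, where B = b and c\<^sub>1 = "- real s - 1" and c\<^sub>2 = 0])
    show "eventually (\<lambda>x. log b x + (- real s - 1) \<le> real (\<phi> x - s)) at_top"
      "eventually (\<lambda>x. real (\<phi> x - s) \<le> log b x + 0) at_top"
      using eventually_ge_at_top[of 1] by (eventually_elim, use \<phi> in force)+
  qed (use b in simp)
  have pos: "eventually (\<lambda>x::real. ln (ln x) > 0) at_top"
    by real_asymp
  have "eventually (\<lambda>x. T (\<phi> x - s) / ln (ln x)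
      \<le> sum g ({..nat \<lfloor>x\<rfloor>} \<inter> leading_digits_set b s) / ln (ln x)) at_top"
    using pos eventually_ge_at_top[of "real b ^ s"]
  proof eventually_elim
    case (elim x)
    then show ?case
      unfolding T_def \<phi>_def
      by (intro divide_right_mono sum_leading_digits_floor_bounds(1)[OF nonneg b s]) simp_all
  qed
  moreover have "eventually (\<lambda>x. sum g ({..nat \<lfloor>x\<rfloor>} \<inter> leading_digits_set b s) / ln (ln x)
      \<le> T (\<phi> x + 1) / ln (ln x)) at_top"
    using pos eventually_ge_at_top[of "real b ^ s"]
  proof eventually_elim
    case (elim x)
    then show ?case
      unfolding T_def \<phi>_def
      by (intro divide_right_mono sum_leading_digits_floor_bounds(2)[OF nonneg b s]) simp_all
  qed
  ultimately show ?thesis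
    by (rule tendsto_sandwich[OF _ _ lim_lower lim_upper])
qed


section \<open>Primes whose norm begins with a given digit string\<close>

lemma recip_norm_sum_primes_by_norm:
  assumes nf: "number_field K" and B: "B \<subseteq> nonzero_primes K"
  shows "recip_norm_sum K B x = (\<Sum>n\<le>nat \<lfloor>x\<rfloor>. \<Sum>P\<in>{P \<in> B. abs_norm K P = n}. 1 / real n)"
proof -
  have norm: "abs_norm K P \<ge> 1" if "P \<in> B" for P
    using abs_norm_nonzero_prime_ge_2[OF nf] B that by fastforce
  have "real N \<le> x \<longleftrightarrow> N \<le> nat \<lfloor>x\<rfloor>" if "N \<ge> 1" for N :: nat
  proof
    assume N: "N \<le> nat \<lfloor>x\<rfloor>"
    then have "real N \<le> real (nat \<lfloor>x\<rfloor>)"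
      by (rule of_nat_mono)
    moreover have "0 \<le> \<lfloor>x\<rfloor>"
      using N that by linarith
    ultimately show "real N \<le> x"
      using of_int_floor_le[of x] by linarith
  qed (rule le_nat_floor)
  then have eq: "{P \<in> B. real (abs_norm K P) \<le> x} = {P \<in> B. abs_norm K P \<le> nat \<lfloor>x\<rfloor>}"
    using norm by blast
  have fin: "finite {P \<in> B. abs_norm K P \<le> nat \<lfloor>x\<rfloor>}"
    unfolding eq[symmetric]
    by (rule finite_subset[OF _ finite_nonzero_primes_abs_norm_le[OF nf, of x]]) (use B in blast)
  have "recip_norm_sum K B x = (\<Sum>P\<in>{P \<in> B. abs_norm K P \<le> nat \<lfloor>x\<rfloor>}. 1 / real (abs_norm K P))"
    unfolding recip_norm_sum_def eq ..
  also have "\<dots> = (\<Sum>n\<le>nat \<lfloor>x\<rfloor>. \<Sum>P\<in>{P \<in> {P \<in> B. abs_norm K P \<le> nat \<lfloor>x\<rfloor>}. abs_norm K P = n}.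
      1 / real (abs_norm K P))"
    by (rule sum.group[symmetric]) (use fin in auto)
  also have "\<dots> = (\<Sum>n\<le>nat \<lfloor>x\<rfloor>. \<Sum>P\<in>{P \<in> B. abs_norm K P = n}. 1 / real n)"
    by (intro sum.cong) auto
  finally show ?thesis .
qed

lemma recip_norm_sum_leading_digit_subset:
  assumes nf: "number_field K" and A: "A \<subseteq> nonzero_primes K"
    and b: "2 \<le> b" and S: "S \<noteq> []" "\<forall>a\<in>set S. a < b" "S ! 0 \<noteq> 0"
  shows "recip_norm_sum K (leading_digit_subset K A b S) x
       = sum (\<lambda>n. \<Sum>P\<in>{P \<in> A. abs_norm K P = n}. 1 / real n)
           ({..nat \<lfloor>x\<rfloor>} \<inter> leading_digits_set b (digit_value b S))"
proof -
  let ?L = "leading_digits_set b (digit_value b S)"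
  have "leading_digit_subset K A b S \<subseteq> nonzero_primes K"
    using A by (auto simp: leading_digit_subset_def)
  then have "recip_norm_sum K (leading_digit_subset K A b S) x
      = (\<Sum>n\<le>nat \<lfloor>x\<rfloor>. \<Sum>P\<in>{P \<in> leading_digit_subset K A b S. abs_norm K P = n}. 1 / real n)"
    by (rule recip_norm_sum_primes_by_norm[OF nf])
  also have "\<dots> = (\<Sum>n\<le>nat \<lfloor>x\<rfloor>. if n \<in> ?L then \<Sum>P\<in>{P \<in> A. abs_norm K P = n}. 1 / real n else 0)"
  proof (rule sum.cong)
    fix n
    have "{P \<in> leading_digit_subset K A b S. abs_norm K P = n}
        = (if n \<in> ?L then {P \<in> A. abs_norm K P = n} else {})"
      using prefix_base_digits_iff[OF b S] by (auto simp: leading_digit_subset_def)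
    then show "(\<Sum>P\<in>{P \<in> leading_digit_subset K A b S. abs_norm K P = n}. 1 / real n)
        = (if n \<in> ?L then \<Sum>P\<in>{P \<in> A. abs_norm K P = n}. 1 / real n else 0)"
      by simp
  qed simp
  also have "\<dots> = sum (\<lambda>n. \<Sum>P\<in>{P \<in> A. abs_norm K P = n}. 1 / real n) ({..nat \<lfloor>x\<rfloor>} \<inter> ?L)"
    by (rule sum.inter_restrict[symmetric]) simp
  finally show ?thesis .
qed

lemma log_densities_eq_if_tendsto:
  assumes "((\<lambda>x. recip_norm_sum K B x / ln (ln x)) \<longlongrightarrow> d) at_top"
  shows "upper_log_density K B = ereal d \<and> lower_log_density K B = ereal d"
  using lim_imp_Limsup[OF _ tendsto_ereal[OF assms]] lim_imp_Liminf[OF _ tendsto_ereal[OF assms]]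
  by (simp add: upper_log_density_def lower_log_density_def)

theorem theorem1p1:
  fixes K :: "complex set" and A :: "complex set set" and \<delta> C :: real
    and b :: nat and S :: "nat list"
  assumes "number_field K"
    and "A \<subseteq> nonzero_primes K"
    and "\<delta> \<ge> 0"
    and "(\<lambda>x. recip_norm_sum K A x - (\<delta> * ln (ln x) + C)) \<in> o[at_top](\<lambda>x. 1 / ln x)"
    and "b \<ge> 2"
    and "length S \<ge> 1"
    and "\<forall>a\<in>set S. a < b"
    and "S ! 0 \<noteq> 0"
  shows "upper_log_density K (leading_digit_subset K A b S) = ereal (\<delta> * log b (1 + 1 / real (digit_value b S)))
       \<and> lower_log_density K (leading_digit_subset K A b S) = ereal (\<delta> * log b (1 + 1 / real (digit_value b S)))"
proof -
  note nf = assms(1) and A = assms(2) and hyp = assms(4) and b = assms(5)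
  have S: "S \<noteq> []" "\<forall>a\<in>set S. a < b" "S ! 0 \<noteq> 0"
    using assms(6-8) by auto
  define g where "g n = (\<Sum>P\<in>{P \<in> A. abs_norm K P = n}. 1 / real n)" for n
  have "(\<lambda>x. (\<Sum>n\<le>nat \<lfloor>x\<rfloor>. g n) - (\<delta> * ln (ln x) + C)) \<in> o(\<lambda>x. 1 / ln x)"
    using hyp by (simp add: recip_norm_sum_primes_by_norm[OF nf A] g_def)
  then have "((\<lambda>x. sum g ({..nat \<lfloor>x\<rfloor>} \<inter> leading_digits_set b (digit_value b S)) / ln (ln x))
      \<longlongrightarrow> \<delta> * log b (1 + 1 / real (digit_value b S))) at_top"
    using digit_value_pos[OF b S]
    by (intro leading_digits_sum_over_ln_ln_tendsto[OF _ _ b]) (auto simp: g_def sum_nonneg)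
  then show ?thesis
    by (intro log_densities_eq_if_tendsto)
      (simp add: recip_norm_sum_leading_digit_subset[OF nf A b S] g_def)
qed

end
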